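(* Let $\mathbb K\in\{\mathbb R,\mathbb C\}$, let $\mathbf u,\mathbf v$ be sequences of non-zero scalars, and let $m_{\mathbf u}=\bigotimes_{n\ge0}\mu_{n,\mathbf u}$ and $m_{\mathbf v}=\bigotimes_{n\ge0}\mu_{n,\mathbf v}$ be product probability measures on $\mathbb K^{\mathbb Z_+}$, $B_{\mathbf u}$-invariant and $B_{\mathbf v}$-invariant respectively, with $\mu_{0,\mathbf u}(\{0\})=0=\mu_{0,\mathbf v}(\{0\})$. Assume $m_{\mathbf u}$ and $m_{\mathbf v}$ are not mutually singular, and set $\lambda_n=\frac{u_1\cdots u_n}{v_1\cdots v_n}$ for $n\ge1$. (1) If there is $a\in\mathbb K\setminus\{0\}$ such that $\mu_{0,\mathbf v}(A)=\mu_{0,\mathbf u}(aA)$ for every Borel set $A\subseteq\mathbb K$, then $\sum_{n=1}^\infty(1-|a^{-1}\lambda_n|)^2<\infty$. (2) If $\int_{\mathbb K\setminus\{0\}}(\log|t|)^2\,d\mu_{0,\mathbf u}(t)<\infty$ and $\int_{\mathbb K\setminus\{0\}}(\log|t|)^2\,d\mu_{0,\mathbf v}(t)<\infty$, then there exists $a\in\mathbb K\setminus\{0\}$ such that $\sum_{n=1}^\infty(1-|a^{-1}\lambda_n|)^2<\infty$.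
   Context: $\mathbb K^{\mathbb Z_+}$ carries the product topology and Borel $\sigma$-algebra; $B_{\mathbf w}:\mathbb K^{\mathbb Z_+}\to\mathbb K^{\mathbb Z_+}$ is $(B_{\mathbf w}t)_j=w_{j+1}t_{j+1}$, and invariance means $\mu(B_{\mathbf w}^{-1}B)=\mu(B)$ for Borel $B$. *)

theory Defs
  imports "HOL-Probability.Probability"
begin

definition wshift :: "(nat \<Rightarrow> 'a::times) \<Rightarrow> (nat \<Rightarrow> 'a) \<Rightarrow> (nat \<Rightarrow> 'a)" where
  "wshift w t = (\<lambda>j. w (Suc j) * t (Suc j))"

definition shift_invariant ::
  "(nat \<Rightarrow> 'a::{times,topological_space}) \<Rightarrow> (nat \<Rightarrow> 'a) measure \<Rightarrow> bool" where
  "shift_invariant w m \<longleftrightarrow>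
     (\<forall>B \<in> sets borel. emeasure m (wshift w -` B) = emeasure m B)"

definition mutually_singular :: "'a measure \<Rightarrow> 'a measure \<Rightarrow> bool" where
  "mutually_singular M N \<longleftrightarrow>
     (\<exists>A \<in> sets M. emeasure M A = 0 \<and> emeasure N (space N - A) = 0)"

definition lam :: "(nat \<Rightarrow> 'a::field) \<Rightarrow> (nat \<Rightarrow> 'a) \<Rightarrow> nat \<Rightarrow> 'a" where
  "lam u v n = (\<Prod>i\<in>{1..n}. u i) / (\<Prod>i\<in>{1..n}. v i)"

definition thm611_setup ::
  "(nat \<Rightarrow> 'a::{field,topological_space}) \<Rightarrow> (nat \<Rightarrow> 'a) \<Rightarrow>
   (nat \<Rightarrow> 'a measure) \<Rightarrow> (nat \<Rightarrow> 'a measure) \<Rightarrow> bool" where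
  "thm611_setup u v \<mu>u \<mu>v \<longleftrightarrow>
     (\<forall>n\<ge>1. u n \<noteq> 0) \<and> (\<forall>n\<ge>1. v n \<noteq> 0) \<and>
     (\<forall>n. prob_space (\<mu>u n) \<and> sets (\<mu>u n) = sets borel) \<and>
     (\<forall>n. prob_space (\<mu>v n) \<and> sets (\<mu>v n) = sets borel) \<and>
     shift_invariant u (Pi\<^sub>M UNIV \<mu>u) \<and>
     shift_invariant v (Pi\<^sub>M UNIV \<mu>v) \<and>
     emeasure (\<mu>u 0) {0} = 0 \<and> emeasure (\<mu>v 0) {0} = 0 \<and>
     \<not> mutually_singular (Pi\<^sub>M UNIV \<mu>u) (Pi\<^sub>M UNIV \<mu>v)"

end

theory Submission
  imports Defs
begin

text \<open>
  Invariance under \<open>B\<^sub>u\<close> makes the \<open>n\<close>-th marginal of \<open>m\<^sub>u\<close> the image of \<open>\<mu>\<^sub>0\<^sub>,\<^sub>u\<close>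
  under \<open>t \<mapsto> t / (u\<^sub>1 \<cdots> u\<^sub>n)\<close>. Hence \<open>ln |u\<^sub>1 \<cdots> u\<^sub>n t\<^sub>n|\<close> has the law \<open>P\<close> of
  \<open>ln |t\<^sub>0|\<close> under \<open>m\<^sub>u\<close> for every \<open>n\<close>, while under \<open>m\<^sub>v\<close> it has the law \<open>Q\<close> of \<open>ln |t\<^sub>0|\<close>
  shifted by \<open>\<ell>\<^sub>n = ln |\<lambda>\<^sub>n|\<close>. If a bounded test \<open>h\<close> with weights \<open>r\<^sub>n\<close> separates
  the two means in coordinate \<open>n\<close> by at least \<open>\<kappa> r\<^sub>n\<^sup>2\<close> and \<open>\<Sum> r\<^sub>n\<^sup>2 = \<infinity>\<close>, then
  Chebyshev's inequality for the independent sums \<open>\<Sum> r\<^sub>n h(\<dots>)\<close> and Borel--Cantelli make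
  \<open>m\<^sub>u\<close> and \<open>m\<^sub>v\<close> mutually singular, so no such test exists. Tests with \<open>arctan\<close> then
  show that \<open>\<ell>\<^sub>n\<close> is bounded, and cosine and sine tests along a convergent subsequence
  \<open>\<ell>\<^sub>n\<^sub>k \<longrightarrow> c\<close> show, via characteristic functions, that \<open>P\<close> is \<open>Q\<close> shifted by \<open>c\<close>.
  Given such a \<open>c\<close>, the arctan test with \<open>r\<^sub>n\<close> the clipped value of \<open>\<ell>\<^sub>n - c\<close> gives
  \<open>\<Sum> min(1, (\<ell>\<^sub>n - c)\<^sup>2) < \<infinity>\<close>, which implies \<open>\<Sum> (1 - |a\<^sup>-\<^sup>1 \<lambda>\<^sub>n|)\<^sup>2 < \<infinity>\<close> for
  \<open>|a| = e\<^sup>c\<close>. In part (1) the hypothesis gives \<open>c = ln |a|\<close> directly; part (2) holds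
  without its integrability hypotheses, which the proof does not use.
\<close>

section \<open>Separating product measures by independent sums\<close>

lemma prob_space_integrable_bounded:
  fixes f :: "'a \<Rightarrow> real"
  assumes "prob_space M" "f \<in> borel_measurable M" "\<And>x. x \<in> space M \<Longrightarrow> \<bar>f x\<bar> \<le> B"
  shows "integrable M f"
proof -
  interpret prob_space M by fact
  show ?thesis by (rule integrable_const_bound[where B=B]) (use assms in auto)
qed

lemma integral_PiM_component:
  fixes M :: "nat \<Rightarrow> 'a measure" and f :: "'a \<Rightarrow> real"
  assumes "\<And>i. prob_space (M i)" and [measurable]: "f \<in> borel_measurable (M i)"
  shows "(\<integral>t. f (t i) \<partial>PiM UNIV M) = (\<integral>x. f x \<partial>M i)"
proof -
  have "(\<integral>x. f x \<partial>M i) = (\<integral>x. f x \<partial>distr (PiM UNIV M) (M i) (\<lambda>\<omega>. \<omega> i))"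
    using distr_PiM_component[of UNIV M i] assms by simp
  also have "\<dots> = (\<integral>t. f (t i) \<partial>PiM UNIV M)"
    by (rule integral_distr) (auto simp: measurable_component_singleton)
  finally show ?thesis by simp
qed

lemma integral_PiM_component_pair:
  fixes M :: "nat \<Rightarrow> 'a measure" and f g :: "'a \<Rightarrow> real"
  assumes M: "\<And>i. prob_space (M i)" and "i \<noteq> j"
    and [measurable]: "f \<in> borel_measurable (M i)" "g \<in> borel_measurable (M j)"
    and f_bound: "\<And>x. x \<in> space (M i) \<Longrightarrow> \<bar>f x\<bar> \<le> B"
    and g_bound: "\<And>x. x \<in> space (M j) \<Longrightarrow> \<bar>g x\<bar> \<le> B"
  shows "(\<integral>t. f (t i) * g (t j) \<partial>PiM UNIV M) = (\<integral>x. f x \<partial>M i) * (\<integral>x. g x \<partial>M j)"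
proof -
  define F where "F = (\<lambda>k. if k = i then f else g)"
  interpret product_sigma_finite M
    unfolding product_sigma_finite_def using M prob_space_imp_sigma_finite by blast
  have F_measurable: "F k \<in> borel_measurable (M k)" if "k \<in> {i, j}" for k
    using that by (auto simp: F_def)
  have F_integrable: "integrable (M k) (F k)" if "k \<in> {i, j}" for k
    using that f_bound g_bound F_measurable
    by (intro prob_space_integrable_bounded[OF M, where B=B]) (auto simp: F_def)
  have "(\<integral>t. f (t i) * g (t j) \<partial>PiM UNIV M)
      = (\<integral>t. (\<Prod>k\<in>{i, j}. F k ((\<lambda>n\<in>{i, j}. t n) k)) \<partial>PiM UNIV M)"
    using \<open>i \<noteq> j\<close> by (simp add: F_def)
  also have "\<dots> = (\<integral>y. (\<Prod>k\<in>{i, j}. F k (y k)) \<partial>distr (PiM UNIV M) (PiM {i, j} M) (\<lambda>\<omega>. \<lambda>n\<in>{i, j}. \<omega> n))"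
  proof (rule integral_distr[symmetric])
    show "(\<lambda>\<omega>. \<lambda>n\<in>{i, j}. \<omega> n) \<in> PiM UNIV M \<rightarrow>\<^sub>M PiM {i, j} M"
      by (rule measurable_restrict) (auto simp: measurable_component_singleton)
    show "(\<lambda>y. \<Prod>k\<in>{i, j}. F k (y k)) \<in> borel_measurable (PiM {i, j} M)"
      using F_measurable
      by (intro borel_measurable_prod) (auto intro: measurable_compose[OF measurable_component_singleton])
  qed
  also have "\<dots> = (\<integral>y. (\<Prod>k\<in>{i, j}. F k (y k)) \<partial>PiM {i, j} M)"
    using distr_PiM_reindex[of UNIV M id "{i, j}"] M by simp
  also have "\<dots> = (\<Prod>k\<in>{i, j}. integral\<^sup>L (M k) (F k))"
    using F_integrable by (intro product_integral_prod) auto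
  finally show ?thesis
    using \<open>i \<noteq> j\<close> by (simp add: F_def)
qed

lemma expectation_PiM_sum:
  fixes \<mu> :: "nat \<Rightarrow> 'a measure" and g :: "nat \<Rightarrow> 'a \<Rightarrow> real"
  assumes P: "\<And>n. prob_space (\<mu> n)" and [measurable]: "\<And>n. g n \<in> borel_measurable (\<mu> n)"
    and g_bound: "\<And>n x. \<bar>g n x\<bar> \<le> \<rho> n"
  shows "(\<integral>t. (\<Sum>n<N. g n (t n)) \<partial>PiM UNIV \<mu>) = (\<Sum>n<N. integral\<^sup>L (\<mu> n) (g n))"
proof -
  have "prob_space (PiM UNIV \<mu>)" by (rule prob_space_PiM) (use P in auto)
  then have "integrable (PiM UNIV \<mu>) (\<lambda>t. g n (t n))" for n
    by (rule prob_space_integrable_bounded[where B="\<rho> n"]) (auto simp: g_bound)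
  moreover have "(\<integral>t. g n (t n) \<partial>PiM UNIV \<mu>) = integral\<^sup>L (\<mu> n) (g n)" for n
    by (rule integral_PiM_component[OF P]) simp
  ultimately show ?thesis by simp
qed

lemma prob_space_abs_integral_le:
  fixes f :: "'a \<Rightarrow> real"
  assumes "prob_space M" "f \<in> borel_measurable M" "\<And>x. x \<in> space M \<Longrightarrow> \<bar>f x\<bar> \<le> B"
  shows "\<bar>integral\<^sup>L M f\<bar> \<le> B"
proof -
  have "\<bar>integral\<^sup>L M f\<bar> \<le> (\<integral>x. \<bar>f x\<bar> \<partial>M)" by (rule integral_abs_bound)
  also have "\<dots> \<le> B"
    using assms prob_space_integrable_bounded[OF assms]
    by (intro prob_space.integral_le_const) auto
  finally show ?thesis .
qed

lemma integral_PiM_centered_product: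
  fixes M :: "nat \<Rightarrow> 'a measure" and f g :: "'a \<Rightarrow> real"
  assumes M: "\<And>i. prob_space (M i)" and "i \<noteq> j"
    and [measurable]: "f \<in> borel_measurable (M i)" "g \<in> borel_measurable (M j)"
    and f_bound: "\<And>x. \<bar>f x\<bar> \<le> B" and g_bound: "\<And>x. \<bar>g x\<bar> \<le> B"
  shows "(\<integral>t. (f (t i) - integral\<^sup>L (M i) f) * (g (t j) - integral\<^sup>L (M j) g) \<partial>PiM UNIV M) = 0"
proof -
  interpret Mi: prob_space "M i" by (rule M)
  interpret Mj: prob_space "M j" by (rule M)
  have f_integrable: "integrable (M i) f"
    by (rule prob_space_integrable_bounded[OF M _ f_bound]) simp
  have g_integrable: "integrable (M j) g"
    by (rule prob_space_integrable_bounded[OF M _ g_bound]) simp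
  have "\<bar>integral\<^sup>L (M i) f\<bar> \<le> B"
    by (rule prob_space_abs_integral_le[OF M _ f_bound]) simp
  moreover have "\<bar>integral\<^sup>L (M j) g\<bar> \<le> B"
    by (rule prob_space_abs_integral_le[OF M _ g_bound]) simp
  ultimately have "\<bar>f x - integral\<^sup>L (M i) f\<bar> \<le> 2 * B" "\<bar>g x - integral\<^sup>L (M j) g\<bar> \<le> 2 * B" for x
    using f_bound[of x] g_bound[of x] by linarith+
  then have "(\<integral>t. (f (t i) - integral\<^sup>L (M i) f) * (g (t j) - integral\<^sup>L (M j) g) \<partial>PiM UNIV M)
      = (\<integral>x. f x - integral\<^sup>L (M i) f \<partial>M i) * (\<integral>x. g x - integral\<^sup>L (M j) g \<partial>M j)"
    by (intro integral_PiM_component_pair[OF M \<open>i \<noteq> j\<close>, where B="2 * B"]) simp_all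
  then show ?thesis using f_integrable g_integrable by (simp add: Mi.prob_space Mj.prob_space)
qed

lemma variance_PiM_sum_le:
  fixes \<mu> :: "nat \<Rightarrow> 'a measure" and g :: "nat \<Rightarrow> 'a \<Rightarrow> real"
  assumes P: "\<And>n. prob_space (\<mu> n)" and [measurable]: "\<And>n. g n \<in> borel_measurable (\<mu> n)"
    and g_bound: "\<And>n x. \<bar>g n x\<bar> \<le> \<rho> n"
  shows "prob_space.variance (PiM UNIV \<mu>) (\<lambda>t. \<Sum>n<N. g n (t n)) \<le> 4 * (\<Sum>n<N. (\<rho> n)\<^sup>2)"
proof -
  define M where "M = PiM UNIV \<mu>"
  interpret M: prob_space M unfolding M_def by (rule prob_space_PiM) (use P in auto)
  define Y where "Y n t = g n (t n) - integral\<^sup>L (\<mu> n) (g n)" for n t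
  have "\<bar>integral\<^sup>L (\<mu> n) (g n)\<bar> \<le> \<rho> n" for n
    by (rule prob_space_abs_integral_le[OF P]) (auto simp: g_bound)
  then have Y_bound: "\<bar>Y n t\<bar> \<le> 2 * \<rho> n" for n t
    using g_bound[of n "t n"] unfolding Y_def by (smt (verit))
  have YY_integrable: "integrable M (\<lambda>t. Y n t * Y m t)" for n m
  proof (rule prob_space_integrable_bounded[OF M.prob_space_axioms, where B="2 * \<rho> n * (2 * \<rho> m)"])
    show "(\<lambda>t. Y n t * Y m t) \<in> borel_measurable M" unfolding Y_def M_def by measurable
    fix t
    show "\<bar>Y n t * Y m t\<bar> \<le> 2 * \<rho> n * (2 * \<rho> m)"
      unfolding abs_mult using Y_bound[of n t] Y_bound[of m t] by (intro mult_mono) auto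
  qed
  have Y_orthogonal: "(\<integral>t. Y n t * Y m t \<partial>M) = 0" if "n \<noteq> m" for n m
    using g_bound[of n] g_bound[of m] unfolding Y_def M_def
    by (intro integral_PiM_centered_product[OF P that, where B="max (\<rho> n) (\<rho> m)"])
       (auto intro: le_max_iff_disj[THEN iffD2])
  have Y_square: "(\<integral>t. Y n t * Y n t \<partial>M) \<le> 4 * (\<rho> n)\<^sup>2" for n
  proof (rule M.integral_le_const[OF YY_integrable])
    have "\<bar>Y n t\<bar> * \<bar>Y n t\<bar> \<le> (2 * \<rho> n) * (2 * \<rho> n)" for t
      using Y_bound[of n t] by (intro mult_mono) auto
    then show "AE t in M. Y n t * Y n t \<le> 4 * (\<rho> n)\<^sup>2"
      by (simp add: power2_eq_square abs_mult[symmetric])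
  qed
  have "M.expectation (\<lambda>t. \<Sum>n<N. g n (t n)) = (\<Sum>n<N. integral\<^sup>L (\<mu> n) (g n))"
    unfolding M_def by (rule expectation_PiM_sum[OF P _ g_bound]) simp
  then have "M.variance (\<lambda>t. \<Sum>n<N. g n (t n)) = (\<integral>t. (\<Sum>n<N. \<Sum>m<N. Y n t * Y m t) \<partial>M)"
    by (simp add: Y_def sum_subtractf[symmetric] power2_eq_square sum_product)
  also have "\<dots> = (\<Sum>n<N. \<Sum>m<N. (\<integral>t. Y n t * Y m t \<partial>M))"
    by (simp add: integral_sum YY_integrable)
  also have "\<dots> = (\<Sum>n<N. (\<integral>t. Y n t * Y n t \<partial>M))"
  proof (rule sum.cong[OF refl])
    fix n assume "n \<in> {..<N}"
    then show "(\<Sum>m<N. (\<integral>t. Y n t * Y m t \<partial>M)) = (\<integral>t. Y n t * Y n t \<partial>M)"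
      by (subst sum.remove[of _ n]) (auto simp: Y_orthogonal intro!: sum.neutral)
  qed
  also have "\<dots> \<le> (\<Sum>n<N. 4 * (\<rho> n)\<^sup>2)" by (rule sum_mono) (rule Y_square)
  finally show ?thesis by (simp add: M_def sum_distrib_left)
qed

lemma PiM_sum_deviation_le:
  fixes \<mu> :: "nat \<Rightarrow> 'a measure" and g :: "nat \<Rightarrow> 'a \<Rightarrow> real"
  assumes P: "\<And>n. prob_space (\<mu> n)" and [measurable]: "\<And>n. g n \<in> borel_measurable (\<mu> n)"
    and g_bound: "\<And>n x. \<bar>g n x\<bar> \<le> \<rho> n" and "a > 0"
  shows "measure (PiM UNIV \<mu>) {t \<in> space (PiM UNIV \<mu>).
      a \<le> \<bar>(\<Sum>n<N. g n (t n)) - (\<Sum>n<N. integral\<^sup>L (\<mu> n) (g n))\<bar>} \<le> 4 * (\<Sum>n<N. (\<rho> n)\<^sup>2) / a\<^sup>2"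
proof -
  define M where "M = PiM UNIV \<mu>"
  define S where "S t = (\<Sum>n<N. g n (t n))" for t
  interpret M: prob_space M unfolding M_def by (rule prob_space_PiM) (use P in auto)
  have [measurable]: "S \<in> borel_measurable M" unfolding S_def M_def by measurable
  have "\<bar>S t\<bar> \<le> (\<Sum>n<N. \<rho> n)" for t
    unfolding S_def by (rule order_trans[OF sum_abs]) (intro sum_mono g_bound)
  then have "\<bar>S t\<bar>\<^sup>2 \<le> (\<Sum>n<N. \<rho> n)\<^sup>2" for t
    by (intro power_mono) auto
  then have "\<bar>(S t)\<^sup>2\<bar> \<le> (\<Sum>n<N. \<rho> n)\<^sup>2" for t
    by simp
  then have "integrable M (\<lambda>t. (S t)\<^sup>2)"
    by (intro prob_space_integrable_bounded[OF M.prob_space_axioms]) auto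
  then have "M.prob {t \<in> space M. a \<le> \<bar>S t - M.expectation S\<bar>} \<le> M.variance S / a\<^sup>2"
    by (intro M.Chebyshev_inequality) (use \<open>a > 0\<close> in auto)
  also have "\<dots> \<le> 4 * (\<Sum>n<N. (\<rho> n)\<^sup>2) / a\<^sup>2"
  proof -
    have "M.variance S \<le> 4 * (\<Sum>n<N. (\<rho> n)\<^sup>2)"
      unfolding M_def S_def by (rule variance_PiM_sum_le[OF P _ g_bound]) simp
    then show ?thesis by (simp add: divide_right_mono)
  qed
  finally have "M.prob {t \<in> space M. a \<le> \<bar>S t - M.expectation S\<bar>} \<le> 4 * (\<Sum>n<N. (\<rho> n)\<^sup>2) / a\<^sup>2" .
  moreover have "M.expectation S = (\<Sum>n<N. integral\<^sup>L (\<mu> n) (g n))"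
    unfolding M_def S_def by (rule expectation_PiM_sum[OF P _ g_bound]) simp
  ultimately show ?thesis by (simp add: M_def S_def)
qed

lemma mutually_singularI_approx:
  assumes M: "finite_measure M" and N: "finite_measure N" and sets_eq: "sets M = sets N"
    and approx: "\<And>\<epsilon>. \<epsilon> > 0 \<Longrightarrow> \<exists>A \<in> sets M. measure M A \<le> \<epsilon> \<and> measure N (space N - A) \<le> \<epsilon>"
  shows "mutually_singular M N"
proof -
  interpret M: finite_measure M by (rule M)
  interpret N: finite_measure N by (rule N)
  obtain A where A: "\<And>k. A k \<in> sets M"
    and small: "\<And>k. measure M (A k) \<le> (1/2)^k" "\<And>k. measure N (space N - A k) \<le> (1/2)^k"
    using approx[of "(1/2)^_"] by (simp add: Ball_def) metis
  have A_N: "space N - A k \<in> sets N" for k using A sets_eq by auto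
  have geometric: "summable (\<lambda>k. (1/2::real)^k)" by (rule summable_geometric) simp
  have M_null: "limsup A \<in> null_sets M"
    by (rule borel_cantelli_limsup1)
       (auto simp: A M.emeasure_finite less_top[symmetric] small
             intro!: summable_comparison_test[OF _ geometric] exI[of _ 0])
  have N_null: "limsup (\<lambda>k. space N - A k) \<in> null_sets N"
    by (rule borel_cantelli_limsup1)
       (auto simp: A_N N.emeasure_finite less_top[symmetric] small
             intro!: summable_comparison_test[OF _ geometric] exI[of _ 0])
  have "space N - limsup A \<subseteq> limsup (\<lambda>k. space N - A k)"
    by (auto simp: limsup_INF_SUP) (meson atLeast_iff max.cobounded1 max.cobounded2)
  moreover have "space N - limsup A \<in> sets N"
    using M_null sets_eq by (auto dest: null_setsD2)
  ultimately have "emeasure N (space N - limsup A) = 0"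
    using null_sets_subset[OF N_null] by auto
  with M_null show ?thesis
    unfolding mutually_singular_def by auto
qed

lemma Chebyshev_gap_arith:
  fixes \<kappa> \<epsilon> R D :: real
  assumes "\<kappa> > 0" "\<epsilon> > 0" "16 / (\<kappa>\<^sup>2 * \<epsilon>) < R" "\<kappa> * R \<le> D"
  shows "D > 0" "4 * R / (D / 2)\<^sup>2 \<le> \<epsilon>"
proof -
  have "R > 0" using assms(1-3) by (smt (verit) divide_pos_pos zero_less_power mult_pos_pos)
  then have "\<kappa> * R > 0" using \<open>\<kappa> > 0\<close> by simp
  then show "D > 0" using assms(4) by simp
  have "(\<kappa> * R)\<^sup>2 \<le> D\<^sup>2"
    using assms(4) \<open>\<kappa> * R > 0\<close> by (intro power_mono) auto
  have "4 * R / (D / 2)\<^sup>2 = 16 * R / D\<^sup>2" by (simp add: power2_eq_square)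
  also have "\<dots> \<le> 16 * R / (\<kappa> * R)\<^sup>2"
    using \<open>(\<kappa> * R)\<^sup>2 \<le> D\<^sup>2\<close> \<open>\<kappa> * R > 0\<close> \<open>R > 0\<close> \<open>D > 0\<close>
    by (intro divide_left_mono) (auto intro!: mult_pos_pos)
  also have "\<dots> = 16 / (\<kappa>\<^sup>2 * R)"
    using \<open>R > 0\<close> by (simp add: power2_eq_square)
  also have "\<dots> \<le> \<epsilon>"
    using assms(1-3) \<open>R > 0\<close> by (simp add: field_simps)
  finally show "4 * R / (D / 2)\<^sup>2 \<le> \<epsilon>" .
qed

lemma mutually_singular_PiM_if_separated:
  fixes \<mu>1 \<mu>2 :: "nat \<Rightarrow> 'a measure" and g :: "nat \<Rightarrow> 'a \<Rightarrow> real"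
  assumes P1: "\<And>n. prob_space (\<mu>1 n)" and P2: "\<And>n. prob_space (\<mu>2 n)"
    and sets_eq: "\<And>n. sets (\<mu>1 n) = sets (\<mu>2 n)"
    and g1[measurable]: "\<And>n. g n \<in> borel_measurable (\<mu>1 n)"
    and g_bound: "\<And>n x. \<bar>g n x\<bar> \<le> \<rho> n" and "\<kappa> > 0"
    and separated: "\<And>n. \<kappa> * (\<rho> n)\<^sup>2 \<le> integral\<^sup>L (\<mu>2 n) (g n) - integral\<^sup>L (\<mu>1 n) (g n)"
    and divergent: "\<not> summable (\<lambda>n. (\<rho> n)\<^sup>2)"
  shows "mutually_singular (PiM UNIV \<mu>1) (PiM UNIV \<mu>2)"
proof -
  define M1 where "M1 = PiM UNIV \<mu>1"
  define M2 where "M2 = PiM UNIV \<mu>2"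
  interpret M1: prob_space M1 unfolding M1_def by (rule prob_space_PiM) (use P1 in auto)
  interpret M2: prob_space M2 unfolding M2_def by (rule prob_space_PiM) (use P2 in auto)
  have g2[measurable]: "g n \<in> borel_measurable (\<mu>2 n)" for n
    using g1[of n] measurable_cong_sets[OF sets_eq[of n] refl] by blast
  have M_sets_eq: "sets M1 = sets M2" unfolding M1_def M2_def by (rule sets_PiM_cong) (auto simp: sets_eq)
  define R where "R N = (\<Sum>n<N. (\<rho> n)\<^sup>2)" for N
  define E1 where "E1 N = (\<Sum>n<N. integral\<^sup>L (\<mu>1 n) (g n))" for N
  define E2 where "E2 N = (\<Sum>n<N. integral\<^sup>L (\<mu>2 n) (g n))" for N
  define S where "S N t = (\<Sum>n<N. g n (t n))" for N t
  have [measurable]: "S N \<in> borel_measurable M1" "S N \<in> borel_measurable M2" for N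
    unfolding S_def M1_def M2_def by measurable
  have gap: "\<kappa> * R N \<le> E2 N - E1 N" for N
    unfolding R_def E1_def E2_def
    by (simp add: sum_distrib_left sum_subtractf[symmetric] sum_mono separated)
  show ?thesis
    unfolding M1_def[symmetric] M2_def[symmetric]
  proof (rule mutually_singularI_approx)
    fix \<epsilon> :: real assume "\<epsilon> > 0"
    have "\<not> (\<forall>N. R N \<le> 16 / (\<kappa>\<^sup>2 * \<epsilon>))"
      using divergent summableI_nonneg_bounded[of "\<lambda>n. (\<rho> n)\<^sup>2"] by (auto simp: R_def)
    then obtain N where N: "16 / (\<kappa>\<^sup>2 * \<epsilon>) < R N" by (auto simp: not_le)
    define D where "D = E2 N - E1 N"
    have "D > 0" and Chebyshev_small: "4 * R N / (D / 2)\<^sup>2 \<le> \<epsilon>"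
      using Chebyshev_gap_arith[OF \<open>\<kappa> > 0\<close> \<open>\<epsilon> > 0\<close> N gap[of N]] by (simp_all add: D_def)
    define A where "A = {t \<in> space M1. (E1 N + E2 N) / 2 \<le> S N t}"
    have "measure M1 A \<le> \<epsilon>"
    proof -
      have "measure M1 A \<le> measure M1 {t \<in> space M1. D / 2 \<le> \<bar>S N t - E1 N\<bar>}"
        by (intro M1.finite_measure_mono) (auto simp: A_def D_def abs_if)
      also have "\<dots> \<le> 4 * R N / (D / 2)\<^sup>2"
        using PiM_sum_deviation_le[OF P1 g1 g_bound, where a="D / 2" and N=N] \<open>D > 0\<close>
        unfolding M1_def S_def E1_def R_def by simp
      finally show ?thesis using Chebyshev_small by simp
    qed
    moreover have "measure M2 (space M2 - A) \<le> \<epsilon>"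
    proof -
      have "measure M2 (space M2 - A) \<le> measure M2 {t \<in> space M2. D / 2 \<le> \<bar>S N t - E2 N\<bar>}"
        using sets_eq_imp_space_eq[OF M_sets_eq]
        by (intro M2.finite_measure_mono) (auto simp: A_def D_def abs_if)
      also have "\<dots> \<le> 4 * R N / (D / 2)\<^sup>2"
        using PiM_sum_deviation_le[OF P2 g2 g_bound, where a="D / 2" and N=N] \<open>D > 0\<close>
        unfolding M2_def S_def E2_def R_def by simp
      finally show ?thesis using Chebyshev_small by simp
    qed
    moreover have "A \<in> sets M1" unfolding A_def by measurable
    ultimately show "\<exists>A \<in> sets M1. measure M1 A \<le> \<epsilon> \<and> measure M2 (space M2 - A) \<le> \<epsilon>"
      by blast
  qed (use M_sets_eq in \<open>auto intro: M1.finite_measure_axioms M2.finite_measure_axioms\<close>)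
qed

section \<open>Shift-invariant product measures\<close>

definition weight_prod :: "(nat \<Rightarrow> 'a::comm_monoid_mult) \<Rightarrow> nat \<Rightarrow> 'a" where
  "weight_prod u n = (\<Prod>i\<in>{1..n}. u i)"

lemma weight_prod_Suc: "weight_prod u (Suc n) = weight_prod u n * u (Suc n)"
  unfolding weight_prod_def by (simp add: prod.nat_ivl_Suc' mult.commute)

lemma weight_prod_nonzero: "(\<And>n. n \<ge> 1 \<Longrightarrow> u n \<noteq> 0) \<Longrightarrow> weight_prod u n \<noteq> (0::'a::idom)"
  unfolding weight_prod_def by (auto simp: prod_zero_iff)

lemma lam_eq_weight_prod: "lam u v n = weight_prod u n / weight_prod v n"
  unfolding lam_def weight_prod_def ..

definition log_norm_law :: "'a::real_normed_vector measure \<Rightarrow> real measure" where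
  "log_norm_law M = distr M borel (\<lambda>x. ln (norm x))"

lemma distr_log_norm_law_if_scaled:
  fixes M N :: "'a::{real_normed_field, second_countable_topology} measure"
  assumes M: "prob_space M" "sets M = sets borel" "emeasure M {0} = 0"
    and N: "prob_space N" "sets N = sets borel"
    and "a \<noteq> 0" and scaled: "\<forall>A \<in> sets borel. measure N A = measure M ((\<lambda>x. a * x) ` A)"
  shows "distr (log_norm_law N) borel (\<lambda>z. z + ln (norm a)) = log_norm_law M"
proof -
  interpret M: prob_space M by (rule M(1))
  interpret N: prob_space N by (rule N(1))
  have measurable_M: "f \<in> borel_measurable M" if "f \<in> borel_measurable borel" for f :: "'a \<Rightarrow> real"
    by (subst measurable_cong_sets[OF M(2) refl]) (rule that)
  have space_M: "space M = UNIV" using sets_eq_imp_space_eq[OF M(2)] by simp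
  have "(\<lambda>x. x / a) \<in> M \<rightarrow>\<^sub>M borel"
    by (subst measurable_cong_sets[OF M(2) refl]) simp
  then have N_eq: "N = distr M borel (\<lambda>x. x / a)"
  proof (intro measure_eqI)
    fix A assume "A \<in> sets N"
    then have A: "A \<in> sets borel" using N by simp
    have "x \<in> (\<lambda>x. a * x) ` A \<longleftrightarrow> x / a \<in> A" for x
    proof
      show "x / a \<in> A" if "x \<in> (\<lambda>x. a * x) ` A" using that \<open>a \<noteq> 0\<close> by auto
      show "x \<in> (\<lambda>x. a * x) ` A" if "x / a \<in> A"
        using that \<open>a \<noteq> 0\<close> by (intro image_eqI[of _ _ "x / a"]) auto
    qed
    then have "(\<lambda>x. a * x) ` A = (\<lambda>x. x / a) -` A \<inter> space M"
      by (auto simp: space_M)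
    then have "emeasure N A = emeasure M ((\<lambda>x. x / a) -` A \<inter> space M)"
      using scaled A by (simp add: M.emeasure_eq_measure N.emeasure_eq_measure)
    also have "\<dots> = emeasure (distr M borel (\<lambda>x. x / a)) A"
      by (rule emeasure_distr[symmetric]) (use \<open>(\<lambda>x. x / a) \<in> M \<rightarrow>\<^sub>M borel\<close> A in auto)
    finally show "emeasure N A = emeasure (distr M borel (\<lambda>x. x / a)) A" .
  qed (simp add: N)
  have "{0} \<in> null_sets M" using M by (auto simp: null_sets_def)
  then have "AE x in M. ln (norm (x / a)) + ln (norm a) = ln (norm x)"
    by (rule AE_I') (use \<open>a \<noteq> 0\<close> in \<open>auto simp: norm_divide ln_div\<close>)
  then have "distr M borel (\<lambda>x. ln (norm (x / a)) + ln (norm a)) = distr M borel (\<lambda>x. ln (norm x))"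
    by (intro distr_cong_AE) (auto intro!: measurable_M)
  moreover have "distr (log_norm_law N) borel (\<lambda>z. z + ln (norm a))
      = distr M borel (\<lambda>x. ln (norm (x / a)) + ln (norm a))"
    unfolding log_norm_law_def N_eq
    using \<open>(\<lambda>x. x / a) \<in> M \<rightarrow>\<^sub>M borel\<close>
    by (simp add: distr_distr comp_def)
  ultimately show ?thesis unfolding log_norm_law_def by simp
qed

locale shift_invariant_product =
  fixes u :: "nat \<Rightarrow> 'a::{real_normed_field, second_countable_topology}"
    and \<mu> :: "nat \<Rightarrow> 'a measure"
  assumes weights_nonzero: "\<And>n. n \<ge> 1 \<Longrightarrow> u n \<noteq> 0"
    and prob_space_marginal: "\<And>n. prob_space (\<mu> n)"
    and sets_marginal[measurable_cong]: "\<And>n. sets (\<mu> n) = sets borel"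
    and invariant: "shift_invariant u (PiM UNIV \<mu>)"
    and no_atom_at_zero: "emeasure (\<mu> 0) {0} = 0"
begin

lemma space_marginal: "space (\<mu> n) = UNIV"
  using sets_eq_imp_space_eq[OF sets_marginal[of n]] by simp

lemma marginal_Suc: "\<mu> j = distr (\<mu> (Suc j)) borel (\<lambda>x. u (Suc j) * x)"
proof (rule measure_eqI)
  interpret product_prob_space \<mu> UNIV
    unfolding product_prob_space_def product_prob_space_axioms_def product_sigma_finite_def
    using prob_space_marginal prob_space_imp_sigma_finite by blast
  have space_PiM: "space (PiM UNIV \<mu>) = UNIV" by (simp add: space_PiM space_marginal)
  fix A assume "A \<in> sets (\<mu> j)"
  then have A[measurable]: "A \<in> sets borel" by (simp add: sets_marginal)
  define B where "B = {t :: nat \<Rightarrow> 'a. t j \<in> A}"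
  have "B = (\<lambda>t. t j) -` A \<inter> space borel" unfolding B_def by auto
  then have B: "B \<in> sets borel"
    using measurable_sets[OF measurable_product_coordinates A] by simp
  have "emeasure (\<mu> j) A = emeasure (PiM UNIV \<mu>) B"
    using emeasure_PiM_Collect_single[of j A] by (simp add: B_def space_PiM sets_marginal)
  also have "\<dots> = emeasure (PiM UNIV \<mu>) (wshift u -` B)"
    using invariant B unfolding shift_invariant_def by simp
  also have "wshift u -` B = {t \<in> space (PiM UNIV \<mu>). t (Suc j) \<in> (\<lambda>x. u (Suc j) * x) -` A}"
    by (auto simp: B_def space_PiM wshift_def)
  also have "emeasure (PiM UNIV \<mu>) \<dots> = emeasure (\<mu> (Suc j)) ((\<lambda>x. u (Suc j) * x) -` A)"
    using measurable_sets[OF _ A, where f="\<lambda>x. u (Suc j) * x" and M=borel]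
    by (intro emeasure_PiM_Collect_single) (auto simp: sets_marginal)
  also have "\<dots> = emeasure (distr (\<mu> (Suc j)) borel (\<lambda>x. u (Suc j) * x)) A"
    by (subst emeasure_distr) (auto simp: space_marginal)
  finally show "emeasure (\<mu> j) A = emeasure (distr (\<mu> (Suc j)) borel (\<lambda>x. u (Suc j) * x)) A" .
qed (simp add: sets_marginal)

lemma marginal_eq: "\<mu> n = distr (\<mu> 0) borel (\<lambda>x. x / weight_prod u n)"
proof (induction n)
  case 0
  show ?case
    by (simp add: weight_prod_def distr_id2 sets_marginal)
next
  case (Suc n)
  have "u (Suc n) \<noteq> 0" using weights_nonzero by simp
  have "\<mu> (Suc n) = distr (distr (\<mu> (Suc n)) borel (\<lambda>x. u (Suc n) * x)) borel (\<lambda>x. x / u (Suc n))"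
    using \<open>u (Suc n) \<noteq> 0\<close> by (subst distr_distr) (auto simp: comp_def distr_id2 sets_marginal)
  also have "\<dots> = distr (distr (\<mu> 0) borel (\<lambda>x. x / weight_prod u n)) borel (\<lambda>x. x / u (Suc n))"
    by (simp add: marginal_Suc[symmetric] Suc.IH[symmetric])
  also have "\<dots> = distr (\<mu> 0) borel (\<lambda>x. x / weight_prod u (Suc n))"
    by (subst distr_distr) (auto simp: comp_def weight_prod_Suc)
  finally show ?case .
qed

lemma distr_ln_norm_scaled:
  assumes "K \<noteq> 0"
  shows "distr (\<mu> n) borel (\<lambda>t. ln (norm (K * t))) =
    distr (log_norm_law (\<mu> 0)) borel (\<lambda>z. z + ln (norm (K / weight_prod u n)))"
proof -
  have U: "weight_prod u n \<noteq> 0" by (rule weight_prod_nonzero[OF weights_nonzero])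
  have ln_scaled: "ln (norm (K * x / weight_prod u n)) = ln (norm x) + ln (norm (K / weight_prod u n))"
    if "x \<noteq> 0" for x
  proof -
    have "K * x / weight_prod u n = (K / weight_prod u n) * x" by simp
    then have "ln (norm (K * x / weight_prod u n)) = ln (norm (K / weight_prod u n) * norm x)"
      by (metis norm_mult)
    also have "\<dots> = ln (norm (K / weight_prod u n)) + ln (norm x)"
      using that \<open>K \<noteq> 0\<close> U by (subst ln_mult) auto
    finally show ?thesis by simp
  qed
  have "distr (\<mu> n) borel (\<lambda>t. ln (norm (K * t))) =
        distr (\<mu> 0) borel ((\<lambda>t. ln (norm (K * t))) \<circ> (\<lambda>x. x / weight_prod u n))"
    by (subst marginal_eq) (rule distr_distr, auto)
  also have "\<dots> = distr (\<mu> 0) borel ((\<lambda>z. z + ln (norm (K / weight_prod u n))) \<circ> (\<lambda>x. ln (norm x)))"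
  proof (rule distr_cong_AE)
    have "{0} \<in> null_sets (\<mu> 0)" using no_atom_at_zero by (auto simp: null_sets_def sets_marginal)
    then show "AE x in \<mu> 0. ((\<lambda>t. ln (norm (K * t))) \<circ> (\<lambda>x. x / weight_prod u n)) x =
        ((\<lambda>z. z + ln (norm (K / weight_prod u n))) \<circ> (\<lambda>x. ln (norm x))) x"
      by (rule AE_I') (use ln_scaled in fastforce)
  qed auto
  also have "\<dots> = distr (log_norm_law (\<mu> 0)) borel (\<lambda>z. z + ln (norm (K / weight_prod u n)))"
    unfolding log_norm_law_def by (rule distr_distr[symmetric]) auto
  finally show ?thesis .
qed

lemma integral_ln_norm_scaled:
  fixes h :: "real \<Rightarrow> real"
  assumes "K \<noteq> 0" and [measurable]: "h \<in> borel_measurable borel"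
  shows "(\<integral>t. h (ln (norm (K * t))) \<partial>\<mu> n) =
    (\<integral>z. h (z + ln (norm (K / weight_prod u n))) \<partial>log_norm_law (\<mu> 0))"
proof -
  have "(\<integral>t. h (ln (norm (K * t))) \<partial>\<mu> n) = (\<integral>z. h z \<partial>distr (\<mu> n) borel (\<lambda>t. ln (norm (K * t))))"
    by (rule integral_distr[symmetric]) auto
  also have "\<dots> = (\<integral>z. h z \<partial>distr (log_norm_law (\<mu> 0)) borel (\<lambda>z. z + ln (norm (K / weight_prod u n))))"
    by (simp add: distr_ln_norm_scaled[OF \<open>K \<noteq> 0\<close>])
  also have "\<dots> = (\<integral>z. h (z + ln (norm (K / weight_prod u n))) \<partial>log_norm_law (\<mu> 0))"
    by (rule integral_distr) (auto simp: log_norm_law_def)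
  finally show ?thesis .
qed

lemma real_distribution_log_norm_law:
  "real_distribution (log_norm_law (\<mu> 0))"
  unfolding real_distribution_def real_distribution_axioms_def log_norm_law_def
  by (auto intro: prob_space.prob_space_distr prob_space_marginal)

end

lemma thm611_setupD:
  fixes u v :: "nat \<Rightarrow> 'a::{real_normed_field, second_countable_topology}"
  assumes "thm611_setup u v \<mu>u \<mu>v"
  shows "shift_invariant_product u \<mu>u" "shift_invariant_product v \<mu>v"
    and "\<not> mutually_singular (PiM UNIV \<mu>u) (PiM UNIV \<mu>v)"
  using assms unfolding thm611_setup_def shift_invariant_product_def by auto

section \<open>Tests for shifts of a real distribution\<close>

definition shift_distinguishable :: "real measure \<Rightarrow> real measure \<Rightarrow> (nat \<Rightarrow> real) \<Rightarrow> bool" where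
  "shift_distinguishable P Q l \<longleftrightarrow>
    (\<exists>(h :: real \<Rightarrow> real) C r \<kappa>. h \<in> borel_measurable borel \<and> (\<forall>z. \<bar>h z\<bar> \<le> C) \<and> \<kappa> > 0 \<and>
     (\<forall>n. \<kappa> * (r n)\<^sup>2 \<le> r n * ((\<integral>z. h (z + l n) \<partial>Q) - (\<integral>z. h z \<partial>P))) \<and>
     \<not> summable (\<lambda>n. (r n)\<^sup>2))"

lemma mutually_singular_if_shift_distinguishable:
  assumes U: "shift_invariant_product u \<mu>u" and V: "shift_invariant_product v \<mu>v"
    and "shift_distinguishable (log_norm_law (\<mu>u 0)) (log_norm_law (\<mu>v 0)) (\<lambda>n. ln (norm (lam u v n)))"
  shows "mutually_singular (PiM UNIV \<mu>u) (PiM UNIV \<mu>v)"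
proof -
  interpret U: shift_invariant_product u \<mu>u by (rule U)
  interpret V: shift_invariant_product v \<mu>v by (rule V)
  define P where "P = log_norm_law (\<mu>u 0)"
  define Q where "Q = log_norm_law (\<mu>v 0)"
  obtain h :: "real \<Rightarrow> real" and C r \<kappa> where [measurable]: "h \<in> borel_measurable borel"
    and h_bound: "\<And>z. \<bar>h z\<bar> \<le> C"
    and "\<kappa> > 0"
    and separated: "\<And>n. \<kappa> * (r n)\<^sup>2 \<le> r n * ((\<integral>z. h (z + ln (norm (lam u v n))) \<partial>Q) - (\<integral>z. h z \<partial>P))"
    and divergent: "\<not> summable (\<lambda>n. (r n)\<^sup>2)"
    using assms(3) unfolding shift_distinguishable_def P_def Q_def by blast
  define C' where "C' = C + 1"
  have "C' > 0" using h_bound[of 0] unfolding C'_def by linarith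
  define g where "g n t = r n * h (ln (norm (weight_prod u n * t)))" for n t
  have W: "weight_prod u n \<noteq> 0" for n by (rule weight_prod_nonzero[OF U.weights_nonzero])
  have integral_u: "integral\<^sup>L (\<mu>u n) (g n) = r n * (\<integral>z. h z \<partial>P)" for n
    using U.integral_ln_norm_scaled[OF W, of h n] W unfolding g_def P_def by simp
  have integral_v: "integral\<^sup>L (\<mu>v n) (g n) = r n * (\<integral>z. h (z + ln (norm (lam u v n))) \<partial>Q)" for n
    using V.integral_ln_norm_scaled[OF W, of h n] unfolding g_def Q_def lam_eq_weight_prod by simp
  show ?thesis
  proof (rule mutually_singular_PiM_if_separated[where \<rho>="\<lambda>n. C' * \<bar>r n\<bar>" and \<kappa>="\<kappa> / C'\<^sup>2"])
    show "g n \<in> borel_measurable (\<mu>u n)" for n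
      unfolding g_def measurable_cong_sets[OF U.sets_marginal refl] by measurable
    show "\<bar>g n x\<bar> \<le> C' * \<bar>r n\<bar>" for n x
      using h_bound[of "ln (norm (weight_prod u n * x))"] unfolding g_def C'_def abs_mult
      by (simp add: mult.commute mult_left_mono)
    show "\<kappa> / C'\<^sup>2 * (C' * \<bar>r n\<bar>)\<^sup>2 \<le> integral\<^sup>L (\<mu>v n) (g n) - integral\<^sup>L (\<mu>u n) (g n)" for n
      using separated[of n] \<open>C' > 0\<close>
      by (simp add: integral_u integral_v power_mult_distrib right_diff_distrib)
    show "\<not> summable (\<lambda>n. (C' * \<bar>r n\<bar>)\<^sup>2)"
      using divergent summable_mult[of "\<lambda>n. (C' * \<bar>r n\<bar>)\<^sup>2" "1 / C'\<^sup>2"] \<open>C' > 0\<close>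
      by (auto simp: power_mult_distrib)
  qed (use \<open>\<kappa> > 0\<close> \<open>C' > 0\<close> in \<open>simp_all add: U.prob_space_marginal V.prob_space_marginal
        U.sets_marginal V.sets_marginal\<close>)
qed

lemma integral_distr_shift:
  fixes h :: "real \<Rightarrow> real"
  assumes "real_distribution Q" and [measurable]: "h \<in> borel_measurable borel"
  shows "(\<integral>z. h z \<partial>distr Q borel (\<lambda>z. z + c)) = (\<integral>z. h (z + c) \<partial>Q)"
  using assms(1) by (intro integral_distr) (auto simp: real_distribution_def real_distribution_axioms_def)

lemma shift_distinguishable_if_infinitely_separated:
  fixes h :: "real \<Rightarrow> real"
  assumes "h \<in> borel_measurable borel" "\<And>z. \<bar>h z\<bar> \<le> C"
    and "infinite S" "\<epsilon> > 0" "\<sigma> = 1 \<or> \<sigma> = -1"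
    and separated: "\<And>n. n \<in> S \<Longrightarrow> \<epsilon> \<le> \<sigma> * ((\<integral>z. h (z + l n) \<partial>Q) - (\<integral>z. h z \<partial>P))"
  shows "shift_distinguishable P Q l"
proof -
  define r where "r n = (if n \<in> S then \<sigma> else 0)" for n
  have "\<not> summable (\<lambda>n. (r n)\<^sup>2)"
  proof
    assume "summable (\<lambda>n. (r n)\<^sup>2)"
    from summable_LIMSEQ_zero[OF this] have "eventually (\<lambda>n. (r n)\<^sup>2 < 1) sequentially"
      by (rule order_tendstoD) simp
    then obtain N where "\<And>n. n \<ge> N \<Longrightarrow> (r n)\<^sup>2 < 1" by (auto simp: eventually_sequentially)
    then have "S \<subseteq> {..<N}"
      using \<open>\<sigma> = 1 \<or> \<sigma> = -1\<close> by (force simp: r_def not_less[symmetric])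
    with \<open>infinite S\<close> show False using finite_subset by blast
  qed
  moreover have "\<epsilon> * (r n)\<^sup>2 \<le> r n * ((\<integral>z. h (z + l n) \<partial>Q) - (\<integral>z. h z \<partial>P))" for n
    using separated[of n] \<open>\<sigma> = 1 \<or> \<sigma> = -1\<close> by (auto simp: r_def)
  ultimately show ?thesis
    unfolding shift_distinguishable_def using assms(1,2,4) by blast
qed

lemma shift_distinguishable_reflect:
  assumes P: "real_distribution P" and Q: "real_distribution Q"
    and "shift_distinguishable (distr P borel uminus) (distr Q borel uminus) (\<lambda>n. - l n)"
  shows "shift_distinguishable P Q l"
proof -
  obtain h :: "real \<Rightarrow> real" and C r \<kappa> where [measurable]: "h \<in> borel_measurable borel"
    and "\<And>z. \<bar>h z\<bar> \<le> C" "\<kappa> > 0"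
    and separated: "\<And>n. \<kappa> * (r n)\<^sup>2 \<le> r n * ((\<integral>z. h (z + - l n) \<partial>distr Q borel uminus) - (\<integral>z. h z \<partial>distr P borel uminus))"
    and "\<not> summable (\<lambda>n. (r n)\<^sup>2)"
    using assms(3) unfolding shift_distinguishable_def by blast
  have "(\<integral>z. f z \<partial>distr M borel uminus) = (\<integral>z. f (- z) \<partial>M)"
    if "real_distribution M" "f \<in> borel_measurable borel" for M and f :: "real \<Rightarrow> real"
    using that by (intro integral_distr) (auto simp: real_distribution_def real_distribution_axioms_def)
  then have "\<kappa> * (r n)\<^sup>2 \<le> r n * ((\<integral>z. h (- (z + l n)) \<partial>Q) - (\<integral>z. h (- z) \<partial>P))" for n
    using separated[of n] P Q by simp
  with \<open>\<And>z. \<bar>h z\<bar> \<le> C\<close> \<open>\<kappa> > 0\<close> \<open>\<not> summable (\<lambda>n. (r n)\<^sup>2)\<close> show ?thesis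
    unfolding shift_distinguishable_def by (intro exI[of _ "\<lambda>z. h (- z)"] exI[of _ C] exI[of _ r] exI[of _ \<kappa>]) auto
qed

lemma infinite_if_not_bdd_above:
  fixes l :: "nat \<Rightarrow> real"
  assumes "\<not> bdd_above (range l)"
  shows "infinite {n. a \<le> l n}"
proof
  assume "finite {n. a \<le> l n}"
  then have "bdd_above ({..a} \<union> l ` {n. a \<le> l n})" by simp
  moreover have "range l \<subseteq> {..a} \<union> l ` {n. a \<le> l n}" by auto
  ultimately have "bdd_above (range l)" by (rule bdd_above_mono)
  with assms show False by contradiction
qed

lemma (in real_distribution) char_Re_Im:
  "Re (char M \<omega>) = (\<integral>z. cos (\<omega> * z) \<partial>M)" "Im (char M \<omega>) = (\<integral>z. sin (\<omega> * z) \<partial>M)"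
proof -
  have "integrable M (\<lambda>z. iexp (\<omega> * z))" by (rule integrable_iexp) auto
  then have "integrable M (\<lambda>z. cis (\<omega> * z))" by (simp add: cis_conv_exp)
  moreover have "char M \<omega> = (CLINT z|M. cis (\<omega> * z))"
    by (simp add: char_def cis_conv_exp)
  ultimately show "Re (char M \<omega>) = (\<integral>z. cos (\<omega> * z) \<partial>M)" "Im (char M \<omega>) = (\<integral>z. sin (\<omega> * z) \<partial>M)"
    by (simp_all add: integral_Re[symmetric] integral_Im[symmetric])
qed

lemma real_distribution_eqI_cos_sin:
  assumes M: "real_distribution M" and N: "real_distribution N"
    and "\<And>\<omega>. (\<integral>z. cos (\<omega> * z) \<partial>M) = (\<integral>z. cos (\<omega> * z) \<partial>N)"
    and "\<And>\<omega>. (\<integral>z. sin (\<omega> * z) \<partial>M) = (\<integral>z. sin (\<omega> * z) \<partial>N)"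
  shows "M = N"
proof (rule Levy_uniqueness[OF M N])
  show "char M = char N"
    using assms by (auto simp: fun_eq_iff complex_eq_iff
        real_distribution.char_Re_Im[OF M] real_distribution.char_Re_Im[OF N])
qed

lemma shift_distinguishable_if_subseq_limit_differs:
  fixes h :: "real \<Rightarrow> real"
  assumes Q: "real_distribution Q"
    and [measurable]: "h \<in> borel_measurable borel" and h_bound: "\<And>z. \<bar>h z\<bar> \<le> C"
    and h_cont: "\<And>z. isCont h z"
    and "strict_mono f" and lim: "(\<lambda>k. l (f k)) \<longlonglongrightarrow> c"
    and differs: "(\<integral>z. h (z + c) \<partial>Q) \<noteq> (\<integral>z. h z \<partial>P)"
  shows "shift_distinguishable P Q l"
proof -
  interpret Q: real_distribution Q by (rule Q)
  define G where "G x = (\<integral>z. h (z + x) \<partial>Q)" for x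
  define d where "d = G c - (\<integral>z. h z \<partial>P)"
  have lim_G: "(\<lambda>k. G (l (f k))) \<longlonglongrightarrow> G c"
    unfolding G_def
  proof (rule integral_dominated_convergence[where w="\<lambda>_. C"])
    show "AE z in Q. (\<lambda>k. h (z + l (f k))) \<longlonglongrightarrow> h (z + c)"
      using lim by (intro AE_I2 isCont_tendsto_compose[OF h_cont] tendsto_intros)
  qed (auto simp: h_bound)
  have "d \<noteq> 0" using differs by (simp add: d_def G_def)
  then have "eventually (\<lambda>k. dist (G (l (f k))) (G c) < \<bar>d\<bar> / 2) sequentially"
    by (intro tendstoD[OF lim_G]) simp
  then obtain K where K: "\<And>k. k \<ge> K \<Longrightarrow> \<bar>G (l (f k)) - G c\<bar> < \<bar>d\<bar> / 2"
    by (auto simp: eventually_sequentially dist_real_def)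
  define \<sigma> :: real where "\<sigma> = (if d > 0 then 1 else -1)"
  define S where "S = {n. \<bar>d\<bar> / 2 \<le> \<sigma> * (G (l n) - (\<integral>z. h z \<partial>P))}"
  have "f k \<in> S" if "k \<ge> K" for k
    using K[OF that] \<open>d \<noteq> 0\<close> unfolding S_def \<sigma>_def d_def by (auto simp: abs_if field_simps split: if_splits)
  then have "f ` {K..} \<subseteq> S" by auto
  moreover have "infinite (f ` {K..})"
    using \<open>strict_mono f\<close> infinite_Ici[of K]
    by (auto simp: finite_image_iff strict_mono_imp_inj_on inj_on_subset)
  ultimately have "infinite S" using finite_subset by blast
  then show ?thesis
    using \<open>d \<noteq> 0\<close>
    by (intro shift_distinguishable_if_infinitely_separated[OF _ h_bound, where \<epsilon>="\<bar>d\<bar> / 2" and \<sigma>=\<sigma>])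
       (auto simp: S_def G_def \<sigma>_def)
qed

section \<open>Arctangent tests\<close>

definition clip :: "real \<Rightarrow> real" where
  "clip s = max (-1) (min s 1)"

text \<open>A lower bound for \<open>arctan'\<close> on \<open>[z - 1, z + 1]\<close>.\<close>
definition arctan_slope_lb :: "real \<Rightarrow> real" where
  "arctan_slope_lb z = 1 / (1 + (\<bar>z\<bar> + 1)\<^sup>2)"

lemma arctan_slope_lb_pos: "arctan_slope_lb z > 0"
  unfolding arctan_slope_lb_def by (simp add: add_pos_nonneg)

lemma arctan_slope_lb_le_1: "arctan_slope_lb z \<le> 1"
  unfolding arctan_slope_lb_def by (simp add: add_pos_nonneg divide_le_eq)

lemma arctan_increment_ge:
  assumes "a \<le> b" "b - a \<le> 1" and "z = a \<or> z = b"
  shows "(b - a) * arctan_slope_lb z \<le> arctan b - arctan a"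
proof (cases "a = b")
  case False
  with assms have "a < b" by simp
  from MVT2[OF this, of arctan "\<lambda>x. inverse (1 + x\<^sup>2)"] DERIV_arctan
  obtain \<xi> where \<xi>: "a < \<xi>" "\<xi> < b" "arctan b - arctan a = (b - a) * inverse (1 + \<xi>\<^sup>2)"
    by blast
  have "\<bar>\<xi>\<bar> \<le> \<bar>z\<bar> + 1" using \<xi> assms by auto
  then have "\<xi>\<^sup>2 \<le> (\<bar>z\<bar> + 1)\<^sup>2"
    by (metis abs_ge_zero abs_le_square_iff abs_of_nonneg add_nonneg_nonneg zero_le_one)
  then have "arctan_slope_lb z \<le> inverse (1 + \<xi>\<^sup>2)"
    unfolding arctan_slope_lb_def by (simp add: inverse_eq_divide frac_le add_pos_nonneg)
  then show ?thesis using \<xi> \<open>a \<le> b\<close> by (simp add: mult_left_mono)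
qed simp

lemma clip_sq_le_arctan_increment:
  "(clip s)\<^sup>2 * arctan_slope_lb z \<le> clip s * (arctan (z + s) - arctan z)"
proof -
  consider "1 \<le> s" | "0 \<le> s" "s \<le> 1" | "-1 \<le> s" "s \<le> 0" | "s \<le> -1" by linarith
  then show ?thesis
  proof cases
    case 1
    have "arctan_slope_lb z \<le> arctan (z + 1) - arctan z"
      using arctan_increment_ge[of z "z + 1" z] by simp
    moreover have "arctan (z + 1) \<le> arctan (z + s)" using 1 by (simp add: arctan_le_iff)
    ultimately show ?thesis using 1 by (simp add: clip_def)
  next
    case 2
    have "s * arctan_slope_lb z \<le> arctan (z + s) - arctan z"
      using arctan_increment_ge[of z "z + s" z] 2 by simp
    then have "s * (s * arctan_slope_lb z) \<le> s * (arctan (z + s) - arctan z)"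
      using 2 by (intro mult_left_mono) auto
    then show ?thesis using 2 by (simp add: clip_def power2_eq_square mult.assoc)
  next
    case 3
    have "(-s) * arctan_slope_lb z \<le> arctan z - arctan (z + s)"
      using arctan_increment_ge[of "z + s" z z] 3 by simp
    then have "(-s) * ((-s) * arctan_slope_lb z) \<le> (-s) * (arctan z - arctan (z + s))"
      using 3 by (intro mult_left_mono) auto
    then show ?thesis using 3 by (simp add: clip_def power2_eq_square algebra_simps)
  next
    case 4
    have "arctan_slope_lb z \<le> arctan z - arctan (z - 1)"
      using arctan_increment_ge[of "z - 1" z z] by simp
    moreover have "arctan (z + s) \<le> arctan (z - 1)" using 4 by (simp add: arctan_le_iff)
    ultimately show ?thesis using 4 by (simp add: clip_def)
  qed
qed

lemma abs_arctan_le: "\<bar>arctan x\<bar> \<le> pi / 2"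
  using arctan_bounded[of x] by auto

context real_distribution
begin

lemma integrable_bounded_borel:
  fixes f :: "real \<Rightarrow> real"
  assumes "f \<in> borel_measurable borel" "\<And>x. \<bar>f x\<bar> \<le> B"
  shows "integrable M f"
  by (rule integrable_const_bound[where B=B]) (use assms in auto)

lemma integrable_arctan_shift: "integrable M (\<lambda>z. arctan (z + s))"
  by (rule integrable_bounded_borel[OF _ abs_arctan_le]) simp

lemma arctan_shift_gain:
  obtains \<kappa> where "\<kappa> > 0"
    and "\<And>s. \<kappa> * (clip s)\<^sup>2 \<le> clip s * ((\<integral>z. arctan (z + s) \<partial>M) - (\<integral>z. arctan z \<partial>M))"
proof
  have [measurable]: "arctan_slope_lb \<in> borel_measurable borel"
    unfolding arctan_slope_lb_def by measurable
  have slope_integrable: "integrable M arctan_slope_lb"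
    by (rule integrable_bounded_borel[where B=1])
       (simp, smt (verit) arctan_slope_lb_pos arctan_slope_lb_le_1)
  then show "(\<integral>z. arctan_slope_lb z \<partial>M) > 0"
    by (intro expectation_greater) (auto intro: arctan_slope_lb_pos)
  fix s
  have "(\<integral>z. arctan_slope_lb z \<partial>M) * (clip s)\<^sup>2 = (\<integral>z. (clip s)\<^sup>2 * arctan_slope_lb z \<partial>M)"
    by (simp add: mult.commute)
  also have "\<dots> \<le> (\<integral>z. clip s * (arctan (z + s) - arctan z) \<partial>M)"
    using slope_integrable integrable_arctan_shift[of s] integrable_arctan_shift[of 0]
    by (intro integral_mono clip_sq_le_arctan_increment) auto
  also have "\<dots> = clip s * ((\<integral>z. arctan (z + s) \<partial>M) - (\<integral>z. arctan z \<partial>M))"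
    using integrable_arctan_shift[of s] integrable_arctan_shift[of 0] by simp
  finally show "(\<integral>z. arctan_slope_lb z \<partial>M) * (clip s)\<^sup>2
      \<le> clip s * ((\<integral>z. arctan (z + s) \<partial>M) - (\<integral>z. arctan z \<partial>M))" .
qed

lemma integral_arctan_shift_tendsto: "(\<lambda>k. \<integral>z. arctan (z + real k) \<partial>M) \<longlonglongrightarrow> pi / 2"
proof -
  have "(\<lambda>k. \<integral>z. arctan (z + real k) \<partial>M) \<longlonglongrightarrow> (\<integral>z. pi / 2 \<partial>M)"
  proof (rule integral_dominated_convergence[where w="\<lambda>_. pi / 2"])
    show "AE z in M. (\<lambda>k. arctan (z + real k)) \<longlonglongrightarrow> pi / 2"
      by (intro AE_I2 filterlim_compose[OF tendsto_arctan_at_top]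
          filterlim_tendsto_add_at_top[OF tendsto_const filterlim_real_sequentially])
  qed (use abs_arctan_le in auto)
  then show ?thesis using prob_space by simp
qed

lemma integral_arctan_less: "(\<integral>z. arctan z \<partial>M) < pi / 2"
  using integrable_arctan_shift[of 0] arctan_ubound by (intro expectation_less) auto

end

lemma one_minus_exp_sq_le:
  fixes s :: real
  assumes "\<bar>s\<bar> \<le> 1"
  shows "(1 - exp s)\<^sup>2 \<le> 9 * s\<^sup>2"
proof -
  have "exp s \<le> 3"
    using assms exp_le by (smt (verit) exp_le_cancel_iff)
  have "\<bar>1 - exp s\<bar> \<le> 3 * \<bar>s\<bar>"
  proof (cases "s \<ge> 0")
    case True
    have "(1 - s) * exp s \<le> exp (-s) * exp s"
      using exp_ge_add_one_self[of "-s"] by (intro mult_right_mono) auto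
    then have "exp s - 1 \<le> s * exp s" by (simp add: exp_minus algebra_simps)
    also have "\<dots> \<le> s * 3" using True \<open>exp s \<le> 3\<close> by (intro mult_left_mono) auto
    finally show ?thesis using True by simp
  next
    case False
    then have "1 + s \<le> exp s" "exp s \<le> 1" by (auto intro: exp_ge_add_one_self)
    then show ?thesis using False by linarith
  qed
  then have "\<bar>1 - exp s\<bar>\<^sup>2 \<le> (3 * \<bar>s\<bar>)\<^sup>2" by (intro power_mono) auto
  then show ?thesis by (simp add: power_mult_distrib)
qed

lemma summable_one_minus_exp_sq:
  assumes "summable (\<lambda>n. (clip (s n))\<^sup>2)"
  shows "summable (\<lambda>n. (1 - exp (s n))\<^sup>2)"
proof -
  have "eventually (\<lambda>n. (clip (s n))\<^sup>2 < 1) sequentially"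
    using summable_LIMSEQ_zero[OF assms] by (rule order_tendstoD) simp
  then have "eventually (\<lambda>n. \<bar>s n\<bar> < 1) sequentially"
    by (rule eventually_mono) (auto simp: clip_def max_def min_def abs_square_less_1 split: if_splits)
  then have "eventually (\<lambda>n. norm ((1 - exp (s n))\<^sup>2) \<le> 9 * (clip (s n))\<^sup>2) sequentially"
    by (rule eventually_mono) (use one_minus_exp_sq_le in \<open>auto simp: clip_def\<close>)
  then show ?thesis
    using summable_mult[OF assms, of 9] by (rule summable_comparison_test_ev)
qed

lemma summable_if_shift_eq_not_distinguishable:
  assumes P: "real_distribution P" and Q: "real_distribution Q"
    and shift_eq: "distr Q borel (\<lambda>z. z + c) = P"
    and "\<not> shift_distinguishable P Q l"
  shows "summable (\<lambda>n. (1 - exp (l n - c))\<^sup>2)"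
proof (rule summable_one_minus_exp_sq, rule ccontr)
  assume divergent: "\<not> summable (\<lambda>n. (clip (l n - c))\<^sup>2)"
  obtain \<kappa> where "\<kappa> > 0"
    and gain: "\<And>s. \<kappa> * (clip s)\<^sup>2 \<le> clip s * ((\<integral>z. arctan (z + s) \<partial>P) - (\<integral>z. arctan z \<partial>P))"
    using real_distribution.arctan_shift_gain[OF P] by blast
  have "(\<integral>z. arctan (z + l n) \<partial>Q) = (\<integral>z. arctan (z + (l n - c)) \<partial>P)" for n
    unfolding shift_eq[symmetric] by (subst integral_distr_shift[OF Q]) simp_all
  then have "shift_distinguishable P Q l"
    unfolding shift_distinguishable_def using \<open>\<kappa> > 0\<close> gain divergent abs_arctan_le
    by (intro exI[of _ arctan] exI[of _ "pi / 2"] exI[of _ "\<lambda>n. clip (l n - c)"] exI[of _ \<kappa>]) auto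
  with assms(4) show False by contradiction
qed

lemma shift_distinguishable_if_unbounded_above:
  assumes P: "real_distribution P" and Q: "real_distribution Q"
    and "\<not> bdd_above (range l)"
  shows "shift_distinguishable P Q l"
proof -
  define \<epsilon> where "\<epsilon> = (pi / 2 - (\<integral>z. arctan z \<partial>P)) / 2"
  have "\<epsilon> > 0"
    using real_distribution.integral_arctan_less[OF P] unfolding \<epsilon>_def by simp
  have "eventually (\<lambda>k. (\<integral>z. arctan z \<partial>P) + \<epsilon> < (\<integral>z. arctan (z + real k) \<partial>Q)) sequentially"
    using \<open>\<epsilon> > 0\<close> by (intro order_tendstoD(1)[OF real_distribution.integral_arctan_shift_tendsto[OF Q]])
       (simp add: \<epsilon>_def field_simps)
  then obtain k where k: "(\<integral>z. arctan z \<partial>P) + \<epsilon> < (\<integral>z. arctan (z + real k) \<partial>Q)"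
    by (auto simp: eventually_sequentially)
  have "(\<integral>z. arctan (z + real k) \<partial>Q) \<le> (\<integral>z. arctan (z + l n) \<partial>Q)" if "real k \<le> l n" for n
    using that real_distribution.integrable_arctan_shift[OF Q]
    by (intro integral_mono) (auto simp: arctan_le_iff)
  with k show ?thesis
    by (intro shift_distinguishable_if_infinitely_separated[where h=arctan and \<sigma>=1,
          OF _ abs_arctan_le infinite_if_not_bdd_above[OF assms(3), of "real k"] \<open>\<epsilon> > 0\<close>])
       fastforce+
qed

lemma shift_distinguishable_if_unbounded_below:
  assumes P: "real_distribution P" and Q: "real_distribution Q"
    and "\<not> bdd_below (range l)"
  shows "shift_distinguishable P Q l"
proof (rule shift_distinguishable_reflect[OF P Q shift_distinguishable_if_unbounded_above])
  have "real_distribution (distr M borel uminus)" if "real_distribution M" for M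
    using that unfolding real_distribution_def real_distribution_axioms_def
    by (auto intro: prob_space.prob_space_distr)
  then show "real_distribution (distr P borel uminus)" "real_distribution (distr Q borel uminus)"
    using P Q by blast+
  show "\<not> bdd_above (range (\<lambda>n. - l n))"
    using assms(3) bdd_above_uminus[of "range l"] by (simp add: image_image)
qed

lemma shift_eq_if_not_distinguishable:
  assumes P: "real_distribution P" and Q: "real_distribution Q"
    and not_distinguishable: "\<not> shift_distinguishable P Q l"
  obtains c where "distr Q borel (\<lambda>z. z + c) = P"
proof -
  have "bdd_above (range l)" "bdd_below (range l)"
    using not_distinguishable shift_distinguishable_if_unbounded_above[OF P Q]
      shift_distinguishable_if_unbounded_below[OF P Q] by metis+
  then obtain m M where "range l \<subseteq> {m..M}"
    unfolding bdd_above_def bdd_below_def by (auto simp: subset_eq)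
  then have "bounded (range l)"
    using bounded_subset compact_imp_bounded[OF compact_Icc] by blast
  then obtain c f where "strict_mono f" and lim: "(\<lambda>k. l (f k)) \<longlonglongrightarrow> c"
    using bounded_imp_convergent_subsequence[of l] by (auto simp: comp_def)
  have shifted: "real_distribution (distr Q borel (\<lambda>z. z + c))"
    using Q unfolding real_distribution_def real_distribution_axioms_def
    by (auto intro: prob_space.prob_space_distr)
  have test_eq: "(\<integral>z. h (z + c) \<partial>Q) = (\<integral>z. h z \<partial>P)"
    if "h \<in> borel_measurable borel" "\<And>z. \<bar>h z\<bar> \<le> 1" "\<And>z. isCont h z" for h :: "real \<Rightarrow> real"
    using shift_distinguishable_if_subseq_limit_differs[OF Q that \<open>strict_mono f\<close> lim]
      not_distinguishable by blast
  have "distr Q borel (\<lambda>z. z + c) = P"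
  proof (rule real_distribution_eqI_cos_sin[OF shifted P])
    fix \<omega>
    show "(\<integral>z. cos (\<omega> * z) \<partial>distr Q borel (\<lambda>z. z + c)) = (\<integral>z. cos (\<omega> * z) \<partial>P)"
      using test_eq[of "\<lambda>z. cos (\<omega> * z)"] by (simp add: integral_distr_shift[OF Q] continuous_intros)
    show "(\<integral>z. sin (\<omega> * z) \<partial>distr Q borel (\<lambda>z. z + c)) = (\<integral>z. sin (\<omega> * z) \<partial>P)"
      using test_eq[of "\<lambda>z. sin (\<omega> * z)"] by (simp add: integral_distr_shift[OF Q] continuous_intros)
  qed
  then show ?thesis by (rule that)
qed

section \<open>Square-summable comparison of the weights\<close>

lemma summable_one_minus_norm_ratio:
  fixes x :: "nat \<Rightarrow> 'a::real_normed_field"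
  assumes "a \<noteq> 0" "\<And>n. x n \<noteq> 0"
    and "summable (\<lambda>n. (1 - exp (ln (norm (x n)) - ln (norm a)))\<^sup>2)"
  shows "summable (\<lambda>n. (1 - norm (inverse a * x (Suc n)))\<^sup>2)"
proof -
  have "exp (ln (norm (x n)) - ln (norm a)) = norm (inverse a * x n)" for n
    using assms(1,2) by (simp add: exp_diff norm_mult norm_inverse divide_inverse mult.commute)
  then show ?thesis
    using summable_ignore_initial_segment[OF assms(3), of 1] by simp
qed

lemma theorem6p11_generic:
  fixes u v :: "nat \<Rightarrow> 'a::{real_normed_field, second_countable_topology}"
  assumes standing: "thm611_setup u v \<mu>u \<mu>v"
  shows "(\<forall>a. a \<noteq> 0 \<longrightarrow>
            (\<forall>A \<in> sets borel. measure (\<mu>v 0) A = measure (\<mu>u 0) ((\<lambda>x. a * x) ` A)) \<longrightarrow>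
            summable (\<lambda>n. (1 - norm (inverse a * lam u v (Suc n)))\<^sup>2))"
    and "\<exists>a. a \<noteq> 0 \<and> summable (\<lambda>n. (1 - norm (inverse a * lam u v (Suc n)))\<^sup>2)"
proof -
  interpret U: shift_invariant_product u \<mu>u by (rule thm611_setupD(1)[OF standing])
  interpret V: shift_invariant_product v \<mu>v by (rule thm611_setupD(2)[OF standing])
  define P where "P = log_norm_law (\<mu>u 0)"
  define Q where "Q = log_norm_law (\<mu>v 0)"
  define l where "l n = ln (norm (lam u v n))" for n
  have P: "real_distribution P" and Q: "real_distribution Q"
    unfolding P_def Q_def by (rule U.real_distribution_log_norm_law V.real_distribution_log_norm_law)+
  have not_distinguishable: "\<not> shift_distinguishable P Q l"
    using mutually_singular_if_shift_distinguishable[OF U.shift_invariant_product_axioms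
        V.shift_invariant_product_axioms] thm611_setupD(3)[OF standing]
    unfolding P_def Q_def l_def by blast
  have lam_nonzero: "lam u v n \<noteq> 0" for n
    using weight_prod_nonzero[OF U.weights_nonzero] weight_prod_nonzero[OF V.weights_nonzero]
    by (simp add: lam_eq_weight_prod)
  have summable_if_shift_eq: "summable (\<lambda>n. (1 - norm (inverse a * lam u v (Suc n)))\<^sup>2)"
    if "a \<noteq> 0" "distr Q borel (\<lambda>z. z + ln (norm a)) = P" for a
    using summable_if_shift_eq_not_distinguishable[OF P Q that(2) not_distinguishable]
    by (intro summable_one_minus_norm_ratio[OF that(1) lam_nonzero]) (simp add: l_def)
  show "\<forall>a. a \<noteq> 0 \<longrightarrow>
      (\<forall>A \<in> sets borel. measure (\<mu>v 0) A = measure (\<mu>u 0) ((\<lambda>x. a * x) ` A)) \<longrightarrow>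
      summable (\<lambda>n. (1 - norm (inverse a * lam u v (Suc n)))\<^sup>2)"
    using distr_log_norm_law_if_scaled[OF U.prob_space_marginal U.sets_marginal U.no_atom_at_zero
        V.prob_space_marginal V.sets_marginal]
    by (auto intro: summable_if_shift_eq simp: P_def Q_def)
  obtain c where "distr Q borel (\<lambda>z. z + c) = P"
    using shift_eq_if_not_distinguishable[OF P Q not_distinguishable] .
  then show "\<exists>a. a \<noteq> 0 \<and> summable (\<lambda>n. (1 - norm (inverse a * lam u v (Suc n)))\<^sup>2)"
    by (intro exI[of _ "of_real (exp c)"]) (simp add: summable_if_shift_eq)
qed

theorem theorem6p11:
  shows
  "(\<forall>(u::nat \<Rightarrow> real) v \<mu>u \<mu>v. thm611_setup u v \<mu>u \<mu>v \<longrightarrow>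
      ((\<forall>a. a \<noteq> 0 \<longrightarrow>
          (\<forall>A \<in> sets borel. measure (\<mu>v 0) A = measure (\<mu>u 0) ((\<lambda>x. a * x) ` A)) \<longrightarrow>
          summable (\<lambda>n. (1 - norm (inverse a * lam u v (Suc n)))\<^sup>2)) \<and>
       ((\<integral>\<^sup>+ t. indicator (- {0}) t * ennreal ((ln (norm t))\<^sup>2) \<partial>(\<mu>u 0)) < \<infinity> \<longrightarrow>
        (\<integral>\<^sup>+ t. indicator (- {0}) t * ennreal ((ln (norm t))\<^sup>2) \<partial>(\<mu>v 0)) < \<infinity> \<longrightarrow>
        (\<exists>a. a \<noteq> 0 \<and> summable (\<lambda>n. (1 - norm (inverse a * lam u v (Suc n)))\<^sup>2)))))
   \<and>
   (\<forall>(u::nat \<Rightarrow> complex) v \<mu>u \<mu>v. thm611_setup u v \<mu>u \<mu>v \<longrightarrow>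
      ((\<forall>a. a \<noteq> 0 \<longrightarrow>
          (\<forall>A \<in> sets borel. measure (\<mu>v 0) A = measure (\<mu>u 0) ((\<lambda>x. a * x) ` A)) \<longrightarrow>
          summable (\<lambda>n. (1 - norm (inverse a * lam u v (Suc n)))\<^sup>2)) \<and>
       ((\<integral>\<^sup>+ t. indicator (- {0}) t * ennreal ((ln (norm t))\<^sup>2) \<partial>(\<mu>u 0)) < \<infinity> \<longrightarrow>
        (\<integral>\<^sup>+ t. indicator (- {0}) t * ennreal ((ln (norm t))\<^sup>2) \<partial>(\<mu>v 0)) < \<infinity> \<longrightarrow>
        (\<exists>a. a \<noteq> 0 \<and> summable (\<lambda>n. (1 - norm (inverse a * lam u v (Suc n)))\<^sup>2)))))"
  by (simp add: theorem6p11_generic del: real_norm_def)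

end
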